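(* Suppose the OWA weights are nonincreasing, $v_1\ge v_2\ge\dots\ge v_K$, all processing times and weights are positive, and the deterministic problem $1|prec|\sum w_jC_j$ (for the class of precedence constraints under consideration) is solvable in polynomial time. Then \textsc{Min-Owa}~$1|prec|\sum w_jC_j$ is approximable within $K\cdot\min\{w_{\max}/w_{\min},\,p_{\max}/p_{\min}\}$, where $w_{\max}=\max_{j,i}w_j(S_i)$, $w_{\min}=\min_{j,i}w_j(S_i)$, $p_{\max}=\max_{j,i}p_j(S_i)$, $p_{\min}=\min_{j,i}p_j(S_i)$.
   Context: Single machine scheduling under scenarios. A set of jobs $J=\{1,\dots,n\}$ must be processed nonpreemptively on one machine, all jobs being available at time $0$; jobs may be subject to precedence constraints given by a partial order ($i\rightarrow j$ means job $j$ cannot start before job $i$ is completed). A schedule is a permutation $\pi$ of $J$ respecting the precedence constraints; $\Pi$ denotes the set of all schedules. A scenario set $\Gamma=\{S_1,\dots,S_K\}$, $K>1$, is given (part of the input); under scenario $S_i$ job $j$ has processing time $p_j(S_i)$ and weight $w_j(S_i)$. $C_j(\pi,S_i)$ is the sum of $p_k(S_i)$ over $k=j$ and all jobs $k$ preceding $j$ in $\pi$. The cost of $\pi$ under $S_i$ is $f(\pi,S_i)=\sum_{j\in J}w_j(S_i)C_j(\pi,S_i)$. The deterministic problem $1|prec|\sum w_jC_j$ asks, for given single processing times $p_j\ge0$ and weights $w_j\ge0$, for a schedule minimizing $\sum_j w_jC_j$. OWA criterion: given weights $\pmb v=(v_1,\dots,v_K)$ with $v_i\in[0,1]$ and $\sum_i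 v_i=1$, and reals $f_1,\dots,f_K$, let $\sigma$ be a permutation of $[K]$ with $f_{\sigma(1)}\ge\dots\ge f_{\sigma(K)}$ and set $\mathrm{owa}_{\pmb v}(f_1,\dots,f_K)=\sum_{i\in[K]}v_if_{\sigma(i)}$. Set $\mathrm{OWA}(\pi)=\mathrm{owa}_{\pmb v}(f(\pi,S_1),\dots,f(\pi,S_K))$; \textsc{Min-Owa}~$1|prec|\sum w_jC_j$ is $\min_{\pi\in\Pi}\mathrm{OWA}(\pi)$. A problem is approximable within $\rho$ if a polynomial-time algorithm returns a schedule $\pi$ with $\mathrm{OWA}(\pi)\le\rho\cdot\min_{\sigma\in\Pi}\mathrm{OWA}(\sigma)$. *)

theory Defs
  imports Complex_Main
begin

text \<open>Jobs form a finite set J; a precedence relation prec (pairs (i,j) meaning i -> j).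
  A schedule is a list enumerating J without repetition respecting prec.\<close>

definition feasible :: "'j set \<Rightarrow> ('j \<times> 'j) set \<Rightarrow> 'j list \<Rightarrow> bool" where
  "feasible J prec \<pi> \<longleftrightarrow> distinct \<pi> \<and> set \<pi> = J \<and>
     (\<forall>(i, j) \<in> prec. \<exists>a b c. \<pi> = a @ [i] @ b @ [j] @ c)"

definition compl :: "'j list \<Rightarrow> ('j \<Rightarrow> real) \<Rightarrow> 'j \<Rightarrow> real" where
  "compl \<pi> q j = sum_list (map q (takeWhile (\<lambda>x. x \<noteq> j) \<pi>)) + q j"

definition twc :: "'j set \<Rightarrow> ('j \<Rightarrow> real) \<Rightarrow> ('j \<Rightarrow> real) \<Rightarrow> 'j list \<Rightarrow> real" where
  "twc J q w \<pi> = (\<Sum>j\<in>J. w j * compl \<pi> q j)"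

text \<open>OWA of values f 0, ..., f (K-1) with weights v 0, ..., v (K-1):
  v 0 multiplies the largest value, etc.\<close>
definition owa :: "nat \<Rightarrow> (nat \<Rightarrow> real) \<Rightarrow> (nat \<Rightarrow> real) \<Rightarrow> real" where
  "owa K v f = (\<Sum>i<K. v i * (rev (sort (map f [0..<K]))) ! i)"

definition OWA :: "'j set \<Rightarrow> nat \<Rightarrow> (nat \<Rightarrow> real) \<Rightarrow> (nat \<Rightarrow> 'j \<Rightarrow> real)
    \<Rightarrow> (nat \<Rightarrow> 'j \<Rightarrow> real) \<Rightarrow> 'j list \<Rightarrow> real" where
  "OWA J K v p w \<pi> = owa K v (\<lambda>i. twc J (p i) (w i) \<pi>)"

text \<open>An exact oracle (polynomial algorithm) for the deterministic problem 1|prec|sum w_j C_j.\<close>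
definition det_oracle :: "'j set \<Rightarrow> ('j \<times> 'j) set
    \<Rightarrow> (('j \<Rightarrow> real) \<Rightarrow> ('j \<Rightarrow> real) \<Rightarrow> 'j list) \<Rightarrow> bool" where
  "det_oracle J prec solve \<longleftrightarrow>
     (\<forall>q w. (\<forall>j\<in>J. q j \<ge> 0 \<and> w j \<ge> 0) \<longrightarrow>
        feasible J prec (solve q w) \<and>
        (\<forall>\<sigma>. feasible J prec \<sigma> \<longrightarrow> twc J q w (solve q w) \<le> twc J q w \<sigma>))"

definition wmax where "wmax J K (w :: nat \<Rightarrow> 'j \<Rightarrow> real) = Max {w i j | i j. i < K \<and> j \<in> J}"
definition wmin where "wmin J K (w :: nat \<Rightarrow> 'j \<Rightarrow> real) = Min {w i j | i j. i < K \<and> j \<in> J}"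

text \<open>The approximation algorithm: one call to the deterministic oracle on an aggregated
  instance (linear-time preprocessing).\<close>
definition owa_approx :: "'j set \<Rightarrow> nat \<Rightarrow> (nat \<Rightarrow> 'j \<Rightarrow> real) \<Rightarrow> (nat \<Rightarrow> 'j \<Rightarrow> real)
    \<Rightarrow> (('j \<Rightarrow> real) \<Rightarrow> ('j \<Rightarrow> real) \<Rightarrow> 'j list) \<Rightarrow> 'j list" where
  "owa_approx J K p w solve =
     (if wmax J K w / wmin J K w \<le> wmax J K p / wmin J K p
      then solve (\<lambda>j. \<Sum>i<K. p i j) (\<lambda>j. 1)
      else solve (\<lambda>j. 1) (\<lambda>j. \<Sum>i<K. w i j))"

end

theory Submission
  imports Defs "HOL-Library.Multiset"
begin

(* Write F(pi) = sum_i f(pi,S_i) for the total cost over all scenarios.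
   (1) For nonnegative costs and nonincreasing OWA weights summing to 1,
         OWA(pi) <= F(pi) <= K * OWA(pi),
       the second by Chebyshev's sum inequality (weights and sorted costs are both
       nonincreasing, so the OWA is at least the mean cost).
   (2) F is sandwiched between multiples of a deterministic surrogate cost:
       with aggregated processing times P_j = sum_i p_j(S_i) and unit weights,
         wmin * g(pi) <= F(pi) <= wmax * g(pi);
       with unit processing times and aggregated weights W_j = sum_i w_j(S_i),
         pmin * g(pi) <= F(pi) <= pmax * g(pi).
   (3) An exact minimiser of a surrogate g with a*g <= F <= b*g is a b/a-approximation
       for F.  The algorithm picks the surrogate with the smaller ratio b/a.
   Chaining (1), (3), (1) gives OWA(pi) <= F(pi) <= rho * F(sigma) <= rho * K * OWA(sigma). *)

lemma sorted_values:
  fixes f :: "nat \<Rightarrow> real"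
  assumes L: "L = rev (sort (map f [0..<K]))"
  shows "(\<Sum>i<K. L ! i) = (\<Sum>i<K. f i)"
    and "\<And>i. i < K \<Longrightarrow> L ! i \<in> f ` {..<K}"
    and "\<And>i j. i \<le> j \<Longrightarrow> j < K \<Longrightarrow> L ! j \<le> L ! i"
proof -
  have len: "length L = K" by (simp add: L)
  have "(\<Sum>i<K. L ! i) = sum_list L"
    using len by (simp add: sum_list_sum_nth atLeast0LessThan)
  also have "\<dots> = sum_list (map f [0..<K])"
    by (simp add: L flip: sum_mset_sum_list)
  also have "\<dots> = (\<Sum>i<K. f i)"
    by (simp add: sum_list_sum_nth atLeast0LessThan)
  finally show "(\<Sum>i<K. L ! i) = (\<Sum>i<K. f i)" .
  show "L ! i \<in> f ` {..<K}" if "i < K" for i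
  proof -
    have "L ! i \<in> set L" using that len by simp
    then show ?thesis by (simp add: L atLeast0LessThan)
  qed
  show "\<And>i j. i \<le> j \<Longrightarrow> j < K \<Longrightarrow> L ! j \<le> L ! i"
    using sorted_rev_nth_mono[of L] len by (simp add: L)
qed

lemma owa_le_sum:
  fixes f v :: "nat \<Rightarrow> real"
  assumes "\<forall>i<K. 0 \<le> f i" and "\<forall>i<K. v i \<le> 1"
  shows "owa K v f \<le> (\<Sum>i<K. f i)"
proof -
  define L where "L = rev (sort (map f [0..<K]))"
  note L = sorted_values[OF L_def]
  have "owa K v f = (\<Sum>i<K. v i * L ! i)" by (simp add: owa_def L_def)
  also have "\<dots> \<le> (\<Sum>i<K. L ! i)"
  proof (rule sum_mono)
    fix i assume "i \<in> {..<K}"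
    then have "0 \<le> L ! i" and "v i \<le> 1" using L(2)[of i] assms by auto
    then show "v i * L ! i \<le> L ! i" using mult_right_mono[of "v i" 1 "L ! i"] by simp
  qed
  finally show ?thesis using L(1) by simp
qed

text \<open>With nonincreasing weights summing to 1, the OWA is at least the mean of the values:
  Chebyshev's sum inequality for the similarly ordered sequences v and L.\<close>
lemma sum_le_K_owa:
  fixes f v :: "nat \<Rightarrow> real"
  assumes "(\<Sum>i<K. v i) = 1" and "\<forall>i j. i \<le> j \<and> j < K \<longrightarrow> v j \<le> v i"
  shows "(\<Sum>i<K. f i) \<le> real K * owa K v f"
proof -
  define L where "L = rev (sort (map f [0..<K]))"
  note L = sorted_values[OF L_def]
  have "real K * (\<Sum>k=0..<K. (- v k) * L ! k) \<le> (\<Sum>k=0..<K. - v k) * (\<Sum>k=0..<K. L ! k)"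
    by (rule Chebyshev_sum_upper) (use assms L(3) in auto)
  moreover have "owa K v f = (\<Sum>i<K. v i * L ! i)" by (simp add: owa_def L_def)
  ultimately show ?thesis
    using assms(1) L(1) by (simp add: atLeast0LessThan sum_negf)
qed

lemma compl_mono:
  assumes "\<forall>x\<in>J. q x \<le> q' x" and "set \<pi> \<subseteq> J" and "j \<in> J"
  shows "compl \<pi> q j \<le> compl \<pi> q' j"
proof -
  have "sum_list (map q (takeWhile (\<lambda>x. x \<noteq> j) \<pi>))
      \<le> sum_list (map q' (takeWhile (\<lambda>x. x \<noteq> j) \<pi>))"
    by (rule sum_list_mono) (use assms in \<open>auto dest: set_takeWhileD\<close>)
  then show ?thesis unfolding compl_def using assms by (auto intro: add_mono)
qed

lemma compl_nonneg:
  assumes "\<forall>x\<in>J. 0 \<le> q x" and "set \<pi> \<subseteq> J" and "j \<in> J"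
  shows "0 \<le> compl \<pi> q j"
  using compl_mono[of J "\<lambda>_. 0" q \<pi> j] assms by (simp add: compl_def)

lemma compl_scale: "compl \<pi> (\<lambda>x. c * q x) j = c * compl \<pi> q j"
  unfolding compl_def by (simp add: sum_list_const_mult algebra_simps)

lemma compl_sum: "compl \<pi> (\<lambda>x. \<Sum>i\<in>I. q i x) j = (\<Sum>i\<in>I. compl \<pi> (q i) j)"
proof -
  have "sum_list (map (\<lambda>x. \<Sum>i\<in>I. q i x) xs) = (\<Sum>i\<in>I. sum_list (map (q i) xs))" for xs
    by (induct xs) (auto simp: sum.distrib)
  then show ?thesis unfolding compl_def by (simp add: sum.distrib)
qed

lemma twc_nonneg:
  assumes "\<forall>j\<in>J. 0 \<le> q j \<and> 0 \<le> c j" and "set \<pi> \<subseteq> J"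
  shows "0 \<le> twc J q c \<pi>"
  unfolding twc_def using assms compl_nonneg[of J q \<pi>] by (auto intro!: sum_nonneg)

definition total_cost :: "'j set \<Rightarrow> nat \<Rightarrow> (nat \<Rightarrow> 'j \<Rightarrow> real) \<Rightarrow> (nat \<Rightarrow> 'j \<Rightarrow> real)
    \<Rightarrow> 'j list \<Rightarrow> real" where
  "total_cost J K p w \<pi> = (\<Sum>i<K. twc J (p i) (w i) \<pi>)"

lemma total_cost_as_double_sum:
  "total_cost J K p w \<pi> = (\<Sum>j\<in>J. \<Sum>i<K. w i j * compl \<pi> (p i) j)"
  unfolding total_cost_def twc_def by (rule sum.swap)

lemma aggregated_times_sandwich:
  assumes "set \<pi> \<subseteq> J"
    and "\<forall>i<K. \<forall>j\<in>J. 0 \<le> p i j \<and> lo \<le> w i j \<and> w i j \<le> hi"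
  defines "g \<equiv> twc J (\<lambda>j. \<Sum>i<K. p i j) (\<lambda>_. 1) \<pi>"
  shows "lo * g \<le> total_cost J K p w \<pi> \<and> total_cost J K p w \<pi> \<le> hi * g"
proof -
  have c0: "0 \<le> compl \<pi> (p i) j" if "i < K" "j \<in> J" for i j
    using compl_nonneg[of J "p i" \<pi> j] assms that by auto
  have g: "g = (\<Sum>j\<in>J. \<Sum>i<K. compl \<pi> (p i) j)"
    unfolding g_def twc_def compl_sum by simp
  have lower: "lo * g \<le> total_cost J K p w \<pi>"
    unfolding g total_cost_as_double_sum sum_distrib_left
    by (intro sum_mono mult_right_mono) (use assms c0 in auto)
  have upper: "total_cost J K p w \<pi> \<le> hi * g"
    unfolding g total_cost_as_double_sum sum_distrib_left
    by (intro sum_mono mult_right_mono) (use assms c0 in auto)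
  show ?thesis using lower upper ..
qed

lemma aggregated_weights_sandwich:
  assumes "set \<pi> \<subseteq> J"
    and "\<forall>i<K. \<forall>j\<in>J. 0 \<le> w i j \<and> lo \<le> p i j \<and> p i j \<le> hi"
  defines "g \<equiv> twc J (\<lambda>_. 1) (\<lambda>j. \<Sum>i<K. w i j) \<pi>"
  shows "lo * g \<le> total_cost J K p w \<pi> \<and> total_cost J K p w \<pi> \<le> hi * g"
proof -
  have lo: "lo * compl \<pi> (\<lambda>_. 1) j \<le> compl \<pi> (p i) j"
    and hi: "compl \<pi> (p i) j \<le> hi * compl \<pi> (\<lambda>_. 1) j" if "i < K" "j \<in> J" for i j
    using compl_mono[of J "\<lambda>_. lo * 1" "p i" \<pi> j] compl_mono[of J "p i" "\<lambda>_. hi * 1" \<pi> j]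
      assms that by (simp_all only: compl_scale) auto
  have g: "g = (\<Sum>j\<in>J. \<Sum>i<K. w i j * compl \<pi> (\<lambda>_. 1) j)"
    unfolding g_def twc_def by (simp add: sum_distrib_right)
  have lower: "lo * g \<le> total_cost J K p w \<pi>"
    unfolding g total_cost_as_double_sum sum_distrib_left
  proof (intro sum_mono)
    fix j i assume "j \<in> J" "i \<in> {..<K}"
    then show "lo * (w i j * compl \<pi> (\<lambda>_. 1) j) \<le> w i j * compl \<pi> (p i) j"
      using mult_left_mono[OF lo, of i j "w i j"] assms(2) by (simp add: algebra_simps)
  qed
  have upper: "total_cost J K p w \<pi> \<le> hi * g"
    unfolding g total_cost_as_double_sum sum_distrib_left
  proof (intro sum_mono)
    fix j i assume "j \<in> J" "i \<in> {..<K}"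
    then show "w i j * compl \<pi> (p i) j \<le> hi * (w i j * compl \<pi> (\<lambda>_. 1) j)"
      using mult_left_mono[OF hi, of i j "w i j"] assms(2) by (simp add: algebra_simps)
  qed
  show ?thesis using lower upper ..
qed

lemma extreme_values:
  fixes g :: "nat \<Rightarrow> 'j \<Rightarrow> real"
  assumes "finite J" and "J \<noteq> {}" and "K > 0" and "\<forall>i<K. \<forall>j\<in>J. g i j > 0"
  shows "\<And>i j. i < K \<Longrightarrow> j \<in> J \<Longrightarrow> wmin J K g \<le> g i j \<and> g i j \<le> wmax J K g"
    and "0 < wmin J K g" and "wmin J K g \<le> wmax J K g"
proof -
  have eq: "{g i j | i j. i < K \<and> j \<in> J} = (\<lambda>(i, j). g i j) ` ({..<K} \<times> J)" by auto
  have fin: "finite {g i j | i j. i < K \<and> j \<in> J}" unfolding eq using assms by simp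
  have ne: "{g i j | i j. i < K \<and> j \<in> J} \<noteq> {}" using assms by auto
  show bounds: "\<And>i j. i < K \<Longrightarrow> j \<in> J \<Longrightarrow> wmin J K g \<le> g i j \<and> g i j \<le> wmax J K g"
    unfolding wmax_def wmin_def using fin by (auto intro: Max_ge Min_le)
  have "wmin J K g \<in> {g i j | i j. i < K \<and> j \<in> J}"
    unfolding wmin_def using fin ne by (rule Min_in)
  then show "0 < wmin J K g" using assms by auto
  obtain j where "j \<in> J" using assms(2) by blast
  then show "wmin J K g \<le> wmax J K g" using bounds[of 0 j] assms(3) by fastforce
qed

lemma exact_surrogate_approximation:
  fixes F :: "'j list \<Rightarrow> real"
  assumes "det_oracle J prec solve" and "\<forall>j\<in>J. 0 \<le> q j \<and> 0 \<le> c j"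
    and "0 < a" and "0 \<le> b"
    and sandwich: "\<And>x. set x \<subseteq> J \<Longrightarrow> a * twc J q c x \<le> F x \<and> F x \<le> b * twc J q c x"
  shows "feasible J prec (solve q c) \<and>
         (feasible J prec \<sigma> \<longrightarrow> F (solve q c) \<le> b / a * F \<sigma>)"
proof (intro conjI impI)
  let ?\<pi> = "solve q c"
  have opt: "feasible J prec ?\<pi>" "\<And>\<sigma>. feasible J prec \<sigma> \<Longrightarrow> twc J q c ?\<pi> \<le> twc J q c \<sigma>"
    using assms(1,2) unfolding det_oracle_def by blast+
  then show "feasible J prec ?\<pi>" by blast
  assume \<sigma>: "feasible J prec \<sigma>"
  have inJ: "set ?\<pi> \<subseteq> J" "set \<sigma> \<subseteq> J" using opt(1) \<sigma> by (simp_all add: feasible_def)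
  have "F ?\<pi> \<le> b * twc J q c ?\<pi>" using sandwich[OF inJ(1)] by blast
  also have "\<dots> \<le> b * twc J q c \<sigma>" using opt(2)[OF \<sigma>] assms(4) by (rule mult_left_mono)
  also have "\<dots> \<le> b * (F \<sigma> / a)"
    using sandwich[OF inJ(2)] assms(3,4) by (intro mult_left_mono) (auto simp: field_simps)
  finally show "F ?\<pi> \<le> b / a * F \<sigma>" by simp
qed

lemma owa_approx_total_cost:
  assumes "finite J" and "J \<noteq> {}" and "K > 0"
    and pos: "\<forall>i<K. \<forall>j\<in>J. p i j > 0 \<and> w i j > 0"
    and exact: "det_oracle J prec solve"
  defines "\<pi> \<equiv> owa_approx J K p w solve"
  shows "feasible J prec \<pi> \<and>
         (feasible J prec \<sigma> \<longrightarrow> total_cost J K p w \<pi>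
           \<le> min (wmax J K w / wmin J K w) (wmax J K p / wmin J K p) * total_cost J K p w \<sigma>)"
proof -
  have wb: "\<forall>i<K. \<forall>j\<in>J. 0 \<le> p i j \<and> wmin J K w \<le> w i j \<and> w i j \<le> wmax J K w"
    and w0: "0 < wmin J K w" and W: "0 \<le> wmax J K w"
    using extreme_values[of J K w] assms by (auto intro: less_imp_le order.trans)
  have pb: "\<forall>i<K. \<forall>j\<in>J. 0 \<le> w i j \<and> wmin J K p \<le> p i j \<and> p i j \<le> wmax J K p"
    and p0: "0 < wmin J K p" and P: "0 \<le> wmax J K p"
    using extreme_values[of J K p] assms by (auto intro: less_imp_le order.trans)
  show ?thesis
  proof (cases "wmax J K w / wmin J K w \<le> wmax J K p / wmin J K p")
    case True
    then have "\<pi> = solve (\<lambda>j. \<Sum>i<K. p i j) (\<lambda>_. 1)" by (simp add: \<pi>_def owa_approx_def)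
    then show ?thesis
      using exact_surrogate_approximation[OF exact _ w0 W aggregated_times_sandwich[OF _ wb]]
        True wb by (auto intro: sum_nonneg simp: min_def)
  next
    case False
    then have "\<pi> = solve (\<lambda>_. 1) (\<lambda>j. \<Sum>i<K. w i j)" by (simp add: \<pi>_def owa_approx_def)
    then show ?thesis
      using exact_surrogate_approximation[OF exact _ p0 P aggregated_weights_sandwich[OF _ pb]]
        False pb by (auto intro: sum_nonneg simp: min_def)
  qed
qed

theorem theorem11:
  fixes J :: "'j set" and prec :: "('j \<times> 'j) set" and K :: nat
    and v :: "nat \<Rightarrow> real" and p w :: "nat \<Rightarrow> 'j \<Rightarrow> real"
    and solve :: "('j \<Rightarrow> real) \<Rightarrow> ('j \<Rightarrow> real) \<Rightarrow> 'j list"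
  assumes "finite J" and "J \<noteq> {}"
    and "prec \<subseteq> J \<times> J" and "irrefl prec" and "trans prec"
    and "K > 1"
    and "\<forall>i<K. 0 \<le> v i \<and> v i \<le> 1" and "(\<Sum>i<K. v i) = 1"
    and "\<forall>i j. i \<le> j \<and> j < K \<longrightarrow> v j \<le> v i"
    and "\<forall>i<K. \<forall>j\<in>J. p i j > 0 \<and> w i j > 0"
    and "det_oracle J prec solve"
  shows "feasible J prec (owa_approx J K p w solve) \<and>
         (\<forall>\<sigma>. feasible J prec \<sigma> \<longrightarrow>
            OWA J K v p w (owa_approx J K p w solve)
              \<le> real K * min (wmax J K w / wmin J K w) (wmax J K p / wmin J K p)
                * OWA J K v p w \<sigma>)"
proof -
  let ?\<pi> = "owa_approx J K p w solve"
  let ?\<rho> = "min (wmax J K w / wmin J K w) (wmax J K p / wmin J K p)"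
  have K: "K > 0" using assms(6) by simp
  note approx = owa_approx_total_cost[OF assms(1,2) K assms(10,11)]
  have feasible: "feasible J prec ?\<pi>" using approx by blast
  have \<rho>: "0 \<le> ?\<rho>"
    using extreme_values(2,3)[OF assms(1,2) K, of w] extreme_values(2,3)[OF assms(1,2) K, of p]
      assms(10) by simp
  have costs_nonneg: "\<forall>i<K. 0 \<le> twc J (p i) (w i) x" if "feasible J prec x" for x
    using that assms(10) by (auto intro!: twc_nonneg simp: feasible_def less_imp_le)
  have "OWA J K v p w ?\<pi> \<le> real K * ?\<rho> * OWA J K v p w \<sigma>" if \<sigma>: "feasible J prec \<sigma>" for \<sigma>
  proof -
    have "OWA J K v p w ?\<pi> \<le> total_cost J K p w ?\<pi>"
      unfolding OWA_def total_cost_def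
      using owa_le_sum costs_nonneg[OF feasible] assms(7) by simp
    also have "\<dots> \<le> ?\<rho> * total_cost J K p w \<sigma>" using approx \<sigma> by blast
    also have "\<dots> \<le> ?\<rho> * (real K * OWA J K v p w \<sigma>)"
      unfolding OWA_def total_cost_def
      using sum_le_K_owa[OF assms(8,9)] \<rho> by (rule mult_left_mono)
    finally show ?thesis by (simp add: algebra_simps)
  qed
  then show ?thesis using feasible by blast
qed

end
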